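(* Let $m$ be an even positive integer. Then $|M_1^m|=|M_2^m|$.
   Context: With integers $x,z>0$, $y$: $M_1^m=\{\begin{bmatrix}x&y\\0&z\end{bmatrix}: xz=m,\ 0\leq y<z,\ \gcd(x,y,z)=1,\ x\text{ odd}\}$, $S_1^m=\{\begin{bmatrix}x&y\\0&z\end{bmatrix}: xz=m,\ 0\leq y<z,\ \gcd(x,y,z)=1,\ z\text{ odd}\}$, $S_2^m=\{2^{-1/2}\begin{bmatrix}x&y\\0&z\end{bmatrix}: xz=2m,\ 0\leq y<z,\ \gcd(x,y,z)=1,\ x,z\text{ even}\}$, $M_2^m=S_1^m\cup S_2^m$. *)

theory Defs
  imports "HOL-Analysis.Analysis"
begin

definition utmat :: "real \<Rightarrow> real \<Rightarrow> real \<Rightarrow> real^2^2" where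
  "utmat x y z = vector [vector [x, y], vector [0, z]]"

definition M1 :: "int \<Rightarrow> (real^2^2) set" where
  "M1 m = {utmat (of_int x) (of_int y) (of_int z) | x y z.
      x > 0 \<and> z > 0 \<and> x * z = m \<and> 0 \<le> y \<and> y < z \<and> gcd (gcd x y) z = 1 \<and> odd x}"

definition S1 :: "int \<Rightarrow> (real^2^2) set" where
  "S1 m = {utmat (of_int x) (of_int y) (of_int z) | x y z.
      x > 0 \<and> z > 0 \<and> x * z = m \<and> 0 \<le> y \<and> y < z \<and> gcd (gcd x y) z = 1 \<and> odd z}"

definition S2 :: "int \<Rightarrow> (real^2^2) set" where
  "S2 m = {(1 / sqrt 2) *\<^sub>R utmat (of_int x) (of_int y) (of_int z) | x y z.
      x > 0 \<and> z > 0 \<and> x * z = 2 * m \<and> 0 \<le> y \<and> y < z \<and> gcd (gcd x y) z = 1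
      \<and> even x \<and> even z}"

definition M2 :: "int \<Rightarrow> (real^2^2) set" where
  "M2 m = S1 m \<union> S2 m"

end

theory Submission
  imports Defs
begin

(* Matrices are encoded by integer triples (x, y, z) with x z = m, 0 <= y < z and
   gcd (x, y, z) = 1. Write A m, B m for the triples with x odd, resp. z odd, and E k for those
   with x and z even; the claim becomes |A m| = |B m| + |E (2 m)|. For odd m, A m = B m and
   E (2 m) is empty. Passing from n to m = 2 n, doubling x maps B n onto B m, while halving x
   identifies E (2 m) with the triples for m having z even and y odd; splitting these by the
   parity of x, and A m by the parity of y (the even part being A n via (x, y, z) |-> (x, 2y, 2z)),
   shows that |A m| and |E (2 m)| grow by the same amount, the triples with x and y odd. *)

lemma odd_gcd_if_odd: "odd (a :: int) \<or> odd b \<Longrightarrow> odd (gcd a b)"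
  by (meson dvd_trans gcd_dvd1 gcd_dvd2)

lemma gcd_double_first:
  fixes x y z :: int
  assumes "odd (gcd y z)"
  shows "gcd (gcd (2 * x) y) z = gcd (gcd x y) z"
  using gcd_mult_left_left_cancel[of "gcd y z" 2 x] assms by (simp add: gcd.assoc)

lemma gcd_double_last_two:
  fixes x y z :: int
  assumes "odd x"
  shows "gcd (gcd x (2 * y)) (2 * z) = gcd (gcd x y) z"
proof -
  have "gcd (gcd x (2 * y)) (2 * z) = gcd x (2 * gcd y z)"
    using gcd_mult_distrib_int[of 2 y z] by (simp add: gcd.assoc)
  also have "\<dots> = gcd x (gcd y z)"
    using gcd_mult_left_left_cancel[of x 2 "gcd y z"] assms by (simp add: gcd.commute)
  finally show ?thesis by (simp add: gcd.assoc)
qed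

lemma even_factor_if_mult_eq_double: "x * z = 2 * (m :: int) \<Longrightarrow> even x \<or> even z"
  by (metis dvd_triv_left even_mult_iff)

lemma odd_middle_if_coprime:
  fixes x y z :: int
  assumes "gcd (gcd x y) z = 1" "even x" "even z"
  shows "odd y"
proof
  assume "even y"
  with assms(2,3) have "2 dvd gcd (gcd x y) z" by simp
  with assms(1) show False by simp
qed

definition prim_triples :: "int \<Rightarrow> (int \<Rightarrow> int \<Rightarrow> int \<Rightarrow> bool) \<Rightarrow> (int \<times> int \<times> int) set" where
  "prim_triples m P = {(x, y, z). x > 0 \<and> z > 0 \<and> x * z = m \<and> 0 \<le> y \<and> y < z
      \<and> gcd (gcd x y) z = 1 \<and> P x y z}"

lemma finite_prim_triples: "finite (prim_triples m P)"
proof (rule finite_subset)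
  show "prim_triples m P \<subseteq> {1..m} \<times> {0..m} \<times> {1..m}"
  proof
    fix t assume "t \<in> prim_triples m P"
    then obtain x y z where t: "t = (x, y, z)" and "0 < x" "0 < z" "x * z = m" "0 \<le> y" "y < z"
      by (auto simp: prim_triples_def)
    moreover have "x \<le> x * z" "z \<le> x * z"
      using \<open>0 < x\<close> \<open>0 < z\<close> by (simp_all add: mult_le_cancel_left1 mult_le_cancel_right1)
    ultimately show "t \<in> {1..m} \<times> {0..m} \<times> {1..m}" by auto
  qed
qed simp

lemma prim_triples_cong:
  assumes "\<And>x y z. x * z = m \<Longrightarrow> gcd (gcd x y) z = 1 \<Longrightarrow> P x y z \<longleftrightarrow> Q x y z"
  shows "prim_triples m P = prim_triples m Q"
  using assms by (auto simp: prim_triples_def)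

lemma prim_triples_False: "prim_triples m (\<lambda>_ _ _. False) = {}"
  by (simp add: prim_triples_def)

lemma card_prim_triples_split:
  "card (prim_triples m P) =
     card (prim_triples m (\<lambda>x y z. P x y z \<and> Q x y z))
   + card (prim_triples m (\<lambda>x y z. P x y z \<and> \<not> Q x y z))"
proof -
  have "prim_triples m P =
      prim_triples m (\<lambda>x y z. P x y z \<and> Q x y z) \<union> prim_triples m (\<lambda>x y z. P x y z \<and> \<not> Q x y z)"
    by (auto simp: prim_triples_def)
  moreover have "prim_triples m (\<lambda>x y z. P x y z \<and> Q x y z)
      \<inter> prim_triples m (\<lambda>x y z. P x y z \<and> \<not> Q x y z) = {}"
    by (auto simp: prim_triples_def)
  ultimately show ?thesis
    using card_Un_disjoint[OF finite_prim_triples finite_prim_triples] by simp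
qed

lemma prim_triples_even_even_eq_image:
  "prim_triples (2 * m) (\<lambda>x y z. even x \<and> even z)
     = (\<lambda>(x, y, z). (2 * x, y, z)) ` prim_triples m (\<lambda>x y z. even z \<and> odd y)"
proof (intro equalityI subsetI)
  fix t assume "t \<in> prim_triples (2 * m) (\<lambda>x y z. even x \<and> even z)"
  then obtain a y z where t: "t = (2 * a, y, z)" and
    h: "2 * a > 0" "z > 0" "2 * a * z = 2 * m" "0 \<le> y" "y < z" "gcd (gcd (2 * a) y) z = 1" "even z"
    by (auto simp: prim_triples_def elim!: evenE)
  then have "odd y" using odd_middle_if_coprime by fastforce
  with h have "(a, y, z) \<in> prim_triples m (\<lambda>x y z. even z \<and> odd y)"
    by (simp add: prim_triples_def gcd_double_first odd_gcd_if_odd)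
  with t show "t \<in> (\<lambda>(x, y, z). (2 * x, y, z)) ` prim_triples m (\<lambda>x y z. even z \<and> odd y)"
    by force
next
  fix t assume "t \<in> (\<lambda>(x, y, z). (2 * x, y, z)) ` prim_triples m (\<lambda>x y z. even z \<and> odd y)"
  then show "t \<in> prim_triples (2 * m) (\<lambda>x y z. even x \<and> even z)"
    by (auto simp: prim_triples_def gcd_double_first odd_gcd_if_odd)
qed

lemma prim_triples_odd_last_eq_image:
  "prim_triples (2 * m) (\<lambda>x y z. odd z)
     = (\<lambda>(x, y, z). (2 * x, y, z)) ` prim_triples m (\<lambda>x y z. odd z)"
proof (intro equalityI subsetI)
  fix t assume "t \<in> prim_triples (2 * m) (\<lambda>x y z. odd z)"
  then obtain x y z where t: "t = (x, y, z)" and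
    h: "x > 0" "z > 0" "x * z = 2 * m" "0 \<le> y" "y < z" "gcd (gcd x y) z = 1" "odd z"
    by (auto simp: prim_triples_def)
  then have "even x" using even_factor_if_mult_eq_double by blast
  then obtain a where a: "x = 2 * a" ..
  with h have "gcd (gcd a y) z = 1" by (metis gcd_double_first odd_gcd_if_odd)
  with h a have "(a, y, z) \<in> prim_triples m (\<lambda>x y z. odd z)"
    by (auto simp: prim_triples_def)
  with t a show "t \<in> (\<lambda>(x, y, z). (2 * x, y, z)) ` prim_triples m (\<lambda>x y z. odd z)"
    by force
next
  fix t assume "t \<in> (\<lambda>(x, y, z). (2 * x, y, z)) ` prim_triples m (\<lambda>x y z. odd z)"
  then show "t \<in> prim_triples (2 * m) (\<lambda>x y z. odd z)"
    by (auto simp: prim_triples_def gcd_double_first odd_gcd_if_odd)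
qed

lemma prim_triples_odd_first_even_middle_eq_image:
  "prim_triples (2 * m) (\<lambda>x y z. odd x \<and> even y)
     = (\<lambda>(x, y, z). (x, 2 * y, 2 * z)) ` prim_triples m (\<lambda>x y z. odd x)"
proof (intro equalityI subsetI)
  fix t assume "t \<in> prim_triples (2 * m) (\<lambda>x y z. odd x \<and> even y)"
  then obtain x b z where t: "t = (x, 2 * b, z)" and
    h: "x > 0" "z > 0" "x * z = 2 * m" "0 \<le> b" "2 * b < z" "gcd (gcd x (2 * b)) z = 1" "odd x"
    by (auto simp: prim_triples_def elim!: evenE)
  then have "even z" using even_factor_if_mult_eq_double by blast
  then obtain c where c: "z = 2 * c" ..
  with h have "gcd (gcd x b) c = 1" by (metis gcd_double_last_two)
  with h c have "(x, b, c) \<in> prim_triples m (\<lambda>x y z. odd x)"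
    by (auto simp: prim_triples_def)
  with t c show "t \<in> (\<lambda>(x, y, z). (x, 2 * y, 2 * z)) ` prim_triples m (\<lambda>x y z. odd x)"
    by force
next
  fix t assume "t \<in> (\<lambda>(x, y, z). (x, 2 * y, 2 * z)) ` prim_triples m (\<lambda>x y z. odd x)"
  then show "t \<in> prim_triples (2 * m) (\<lambda>x y z. odd x \<and> even y)"
    by (auto simp: prim_triples_def gcd_double_last_two)
qed

lemma card_prim_triples_even_even:
  "card (prim_triples (2 * m) (\<lambda>x y z. even x \<and> even z))
     = card (prim_triples m (\<lambda>x y z. even z \<and> odd y))"
  unfolding prim_triples_even_even_eq_image by (rule card_image) (auto simp: inj_on_def)

lemma card_prim_triples_odd_last_double:
  "card (prim_triples (2 * m) (\<lambda>x y z. odd z)) = card (prim_triples m (\<lambda>x y z. odd z))"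
  unfolding prim_triples_odd_last_eq_image by (rule card_image) (auto simp: inj_on_def)

lemma card_prim_triples_odd_first_even_middle:
  "card (prim_triples (2 * m) (\<lambda>x y z. odd x \<and> even y)) = card (prim_triples m (\<lambda>x y z. odd x))"
  unfolding prim_triples_odd_first_even_middle_eq_image by (rule card_image) (auto simp: inj_on_def)

lemma prim_triples_odd_first_eq_odd_last:
  assumes "odd m"
  shows "prim_triples m (\<lambda>x y z. odd x) = prim_triples m (\<lambda>x y z. odd z)"
  by (rule prim_triples_cong) (use assms in auto)

lemma prim_triples_even_even_empty:
  assumes "odd m"
  shows "prim_triples (2 * m) (\<lambda>x y z. even x \<and> even z) = {}"
proof -
  have "\<not> (even x \<and> even z)" if "x * z = 2 * m" for x z :: int
  proof
    assume "even x \<and> even z"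
    then obtain a c where "x = 2 * a" "z = 2 * c" by (auto elim!: evenE)
    with that have "m = 2 * (a * c)" by simp
    with assms show False by simp
  qed
  then show ?thesis
    by (simp add: prim_triples_cong[where Q = "\<lambda>_ _ _. False"] prim_triples_False)
qed

lemma card_prim_triples_double_step:
  "card (prim_triples (2 * m) (\<lambda>x y z. odd x)) + card (prim_triples (2 * m) (\<lambda>x y z. even x \<and> even z))
     = card (prim_triples m (\<lambda>x y z. odd x)) + card (prim_triples (4 * m) (\<lambda>x y z. even x \<and> even z))"
proof -
  let ?C = "prim_triples (2 * m) (\<lambda>x y z. odd x \<and> \<not> even y)"
  have "card (prim_triples (2 * m) (\<lambda>x y z. odd x)) = card (prim_triples m (\<lambda>x y z. odd x)) + card ?C"
    using card_prim_triples_split[of "2 * m" "\<lambda>x y z. odd x" "\<lambda>x y z. even y"]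
    by (simp add: card_prim_triples_odd_first_even_middle)
  moreover have "card (prim_triples (4 * m) (\<lambda>x y z. even x \<and> even z))
      = card ?C + card (prim_triples (2 * m) (\<lambda>x y z. even x \<and> even z))"
  proof -
    have "prim_triples (2 * m) (\<lambda>x y z. (even z \<and> odd y) \<and> odd x) = ?C"
      by (rule prim_triples_cong) (auto dest: even_factor_if_mult_eq_double)
    moreover have "prim_triples (2 * m) (\<lambda>x y z. (even z \<and> odd y) \<and> \<not> odd x)
        = prim_triples (2 * m) (\<lambda>x y z. even x \<and> even z)"
      by (rule prim_triples_cong) (auto dest: odd_middle_if_coprime)
    ultimately show ?thesis
      using card_prim_triples_even_even[of "2 * m"]
        card_prim_triples_split[of "2 * m" "\<lambda>x y z. even z \<and> odd y" "\<lambda>x y z. odd x"]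
      by simp
  qed
  ultimately show ?thesis by simp
qed

lemma card_prim_triples_odd_first:
  assumes "m > 0"
  shows "card (prim_triples m (\<lambda>x y z. odd x))
    = card (prim_triples m (\<lambda>x y z. odd z)) + card (prim_triples (2 * m) (\<lambda>x y z. even x \<and> even z))"
  using assms
proof (induction "nat m" arbitrary: m rule: less_induct)
  case less
  show ?case
  proof (cases "even m")
    case True
    then obtain n where m: "m = 2 * n" ..
    with less.prems have "n > 0" "nat n < nat m" by auto
    with less.hyps have "card (prim_triples n (\<lambda>x y z. odd x))
        = card (prim_triples n (\<lambda>x y z. odd z)) + card (prim_triples (2 * n) (\<lambda>x y z. even x \<and> even z))"
      by blast
    with card_prim_triples_double_step[of n] show ?thesis
      by (simp add: m card_prim_triples_odd_last_double)
  next
    case False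
    then show ?thesis
      by (simp add: prim_triples_odd_first_eq_odd_last prim_triples_even_even_empty)
  qed
qed

definition int_utmat :: "int \<times> int \<times> int \<Rightarrow> real^2^2" where
  "int_utmat = (\<lambda>(x, y, z). utmat (of_int x) (of_int y) (of_int z))"

lemma utmat_nth: "utmat a b c $ 1 $ 1 = a" "utmat a b c $ 1 $ 2 = b" "utmat a b c $ 2 $ 2 = c"
  by (simp_all add: utmat_def)

lemma inj_int_utmat: "inj int_utmat"
  by (rule injI)
    (auto simp: int_utmat_def utmat_nth dest: arg_cong[where f = "\<lambda>A. (A $ 1 $ 1, A $ 1 $ 2, A $ 2 $ 2)"])

lemma image_split3: "{f x y z | x y z. P x y z} = (\<lambda>(x, y, z). f x y z) ` {(x, y, z). P x y z}"
  by (auto simp: image_iff) blast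

lemma M1_eq_image: "M1 m = int_utmat ` prim_triples m (\<lambda>x y z. odd x)"
  unfolding M1_def prim_triples_def int_utmat_def by (simp add: image_split3)

lemma S1_eq_image: "S1 m = int_utmat ` prim_triples m (\<lambda>x y z. odd z)"
  unfolding S1_def prim_triples_def int_utmat_def by (simp add: image_split3)

lemma S2_eq_image:
  "S2 m = (\<lambda>t. (1 / sqrt 2) *\<^sub>R int_utmat t) ` prim_triples (2 * m) (\<lambda>x y z. even x \<and> even z)"
proof -
  have "(\<lambda>t. (1 / sqrt 2) *\<^sub>R int_utmat t)
      = (\<lambda>(x, y, z). (1 / sqrt 2) *\<^sub>R utmat (of_int x) (of_int y) (of_int z))"
    by (auto simp: int_utmat_def)
  then show ?thesis
    unfolding S2_def prim_triples_def image_split3 by (simp only:)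
qed

text \<open>Comparing the \<open>(1, 2)\<close> entries gives \<open>y' = sqrt 2 * y\<close>, i.e.\ \<open>y'\<^sup>2 = 2 * y\<^sup>2\<close>,
  while \<open>y'\<close> is odd.\<close>

lemma S1_S2_disjoint: "S1 m \<inter> S2 m = {}"
proof (rule ccontr)
  assume "S1 m \<inter> S2 m \<noteq> {}"
  then obtain x y z x' y' z' where
    eq: "int_utmat (x, y, z) = (1 / sqrt 2) *\<^sub>R int_utmat (x', y', z')" and
    t': "(x', y', z') \<in> prim_triples (2 * m) (\<lambda>x y z. even x \<and> even z)"
    unfolding S1_eq_image S2_eq_image by auto
  from t' have "odd y'"
    by (auto simp: prim_triples_def intro: odd_middle_if_coprime)
  from arg_cong[OF eq, of "\<lambda>A. A $ 1 $ 2"] have "(of_int y :: real) = of_int y' / sqrt 2"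
    by (simp add: int_utmat_def utmat_nth)
  then have "(of_int (2 * y\<^sup>2) :: real) = of_int (y'\<^sup>2)"
    by (simp add: power_divide)
  then have "y'\<^sup>2 = 2 * y\<^sup>2" by linarith
  with \<open>odd y'\<close> show False
    by (metis dvd_triv_left even_power zero_less_numeral)
qed

theorem lemma2p6:
  fixes m :: int
  assumes "m > 0" and "even m"
  shows "card (M1 m) = card (M2 m)"
proof -
  have inj_scaled: "inj (\<lambda>t. (1 / sqrt 2) *\<^sub>R int_utmat t)"
    using inj_int_utmat by (simp add: inj_def)
  have "finite (S1 m)" "finite (S2 m)"
    by (simp_all add: S1_eq_image S2_eq_image finite_prim_triples)
  then have "card (M2 m) = card (S1 m) + card (S2 m)"
    unfolding M2_def by (rule card_Un_disjoint) (rule S1_S2_disjoint)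
  also have "\<dots> = card (prim_triples m (\<lambda>x y z. odd z))
      + card (prim_triples (2 * m) (\<lambda>x y z. even x \<and> even z))"
    unfolding S1_eq_image S2_eq_image
    using card_image[OF inj_on_subset[OF inj_int_utmat]] card_image[OF inj_on_subset[OF inj_scaled]]
    by simp
  also have "\<dots> = card (M1 m)"
    unfolding M1_eq_image
    using card_image[OF inj_on_subset[OF inj_int_utmat]] card_prim_triples_odd_first[OF \<open>m > 0\<close>]
    by simp
  finally show ?thesis by simp
qed

end
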